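(* Let $d\ge1$. For every finite family $\mathcal{F}\subseteq\binom{\mathbb{N}}{d}$ one has $|\mathrm{Inc}(\mathcal{F})|\ge\mathrm{Inc}^{[d]}(|\mathcal{F}|)$.
   Context: $\mathbb{N}=\{1,2,3,\dots\}$; $\binom{\mathbb{N}}{d}$ is the set of $d$-element subsets of $\mathbb{N}$, elements written $\mathbf{u}=(u_1,\ldots,u_d)$ with $u_1<\cdots<u_d$. $\mathrm{Inc}_1$ is the set of maps $\pi\colon\mathbb{N}\to\mathbb{N}$ with $\pi(j)<\pi(j+1)$ and $\pi(j)\le j+1$ for all $j$, acting by $\pi(\mathbf{u})=(\pi(u_1),\ldots,\pi(u_d))$; $\mathrm{Inc}(\mathcal{F})=\{\pi(\mathbf{u})\mid\mathbf{u}\in\mathcal{F},\pi\in\mathrm{Inc}_1\}$. Every positive integer $m$ has a unique $d$-binomial representation $m=\binom{a_d}{d}+\binom{a_{d-1}}{d-1}+\cdots+\binom{a_s}{s}$ with $a_d>a_{d-1}>\cdots>a_s\ge s\ge1$; with this representation, $\mathrm{Inc}^{[d]}(m)=\binom{a_d+1}{d}+\binom{a_{d-1}+1}{d-1}+\cdots+\binom{a_s+1}{s}$, and $\mathrm{Inc}^{[d]}(0)=0$. *)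

theory Defs
  imports Main
begin

text \<open>Positive integers N = {1,2,3,...} are modelled as naturals >= 1.
  d-element subsets of N: finite sets of naturals >= 1 with card d.\<close>

definition dsubsets :: "nat \<Rightarrow> nat set set" where
  "dsubsets d = {u. finite u \<and> card u = d \<and> (\<forall>x\<in>u. 1 \<le> x)}"

text \<open>Inc_1: maps pi : N -> N with pi(j) < pi(j+1) and pi(j) <= j+1 for all j in N
  (the value at 0 is irrelevant).\<close>

definition Inc1 :: "(nat \<Rightarrow> nat) set" where
  "Inc1 = {pi. \<forall>j\<ge>1. 1 \<le> pi j \<and> pi j < pi (Suc j) \<and> pi j \<le> j + 1}"

definition IncF :: "nat set set \<Rightarrow> nat set set" where
  "IncF F = {pi ` u | u pi. u \<in> F \<and> pi \<in> Inc1}"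

definition dbinrep :: "nat \<Rightarrow> nat \<Rightarrow> nat \<Rightarrow> (nat \<Rightarrow> nat) \<Rightarrow> bool" where
  "dbinrep d m s a \<longleftrightarrow> 1 \<le> s \<and> s \<le> d \<and> s \<le> a s \<and>
     (\<forall>i. s \<le> i \<and> i < d \<longrightarrow> a i < a (Suc i)) \<and>
     m = (\<Sum>i=s..d. a i choose i)"

definition IncD :: "nat \<Rightarrow> nat \<Rightarrow> nat" where
  "IncD d m = (if m = 0 then 0 else
     (let (s, a) = (SOME (s, a). dbinrep d m s a) in (\<Sum>i=s..d. (a i + 1) choose i)))"

end

theory Submission
  imports Defs
begin

text \<open>Split F into the sets containing 1, whose link L = {u - {1}} is a family of (d-1)-sets, and
  the remaining sets D. Extending maps of Inc_1 by 1 \<mapsto> 1 shows that adding 1 to the sets of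
  Inc(L) gives sets of Inc(F), while the shift j \<mapsto> j + 1 and Inc(D) supply at least
  max |F| |Inc(D)| further sets of Inc(F), none containing 1. By induction on d and on the weight
  of F (a family avoiding 1 is a shifted copy of a lighter one) the theorem reduces to the
  numerical inequality Inc^[d](m) \<le> Inc^[d-1](f) + max m (Inc^[d](m - f)). Since
  Inc^[d](m) = m + \<partial>^(d)(m) with \<partial>^(d) the Kruskal-Katona shadow bound, that inequality follows
  from the Kruskal-Katona theorem (proved by compression towards 1) applied to the cone over a
  colexicographic initial segment.\<close>

section \<open>Binomial representations and the shadow function\<close>

declare binomial_Suc_Suc [simp del]

lemma cascade_top_exists: "\<exists>a. a choose Suc k \<le> m \<and> m < Suc a choose Suc k \<and> k \<le> a"
proof (induction m)
  case 0
  show ?case by (rule exI[of _ k]) simp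
next
  case (Suc m)
  then obtain a where a: "a choose Suc k \<le> m" "m < Suc a choose Suc k" "k \<le> a" by blast
  show ?case
  proof (cases "Suc m < Suc a choose Suc k")
    case True
    with a show ?thesis by (intro exI[of _ a]) auto
  next
    case False
    then have eq: "Suc m = Suc a choose Suc k" using a by simp
    have "0 < Suc a choose k" using a by simp
    then have "Suc m < Suc (Suc a) choose Suc k" using eq by (simp add: binomial_Suc_Suc)
    with eq a show ?thesis by (intro exI[of _ "Suc a"]) auto
  qed
qed

lemma cascade_top_unique:
  assumes "a choose Suc k \<le> m" "m < Suc a choose Suc k"
    and "b choose Suc k \<le> m" "m < Suc b choose Suc k"
  shows "a = b"
proof (rule ccontr)
  assume "a \<noteq> b"
  then consider "Suc a \<le> b" | "Suc b \<le> a" by linarith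
  then show False
    by cases (use assms binomial_right_mono[of "Suc a" b "Suc k"]
        binomial_right_mono[of "Suc b" a "Suc k"] in linarith)+
qed

text \<open>The leading term of the (k+1)-binomial representation of m: the largest a with
  a choose (k+1) \<le> m (for m = 0 this is k).\<close>

definition cascade_top :: "nat \<Rightarrow> nat \<Rightarrow> nat" where
  "cascade_top k m = (THE a. a choose Suc k \<le> m \<and> m < Suc a choose Suc k)"

lemma cascade_top:
  "cascade_top k m choose Suc k \<le> m" "m < Suc (cascade_top k m) choose Suc k" "k \<le> cascade_top k m"
proof -
  obtain a where a: "a choose Suc k \<le> m" "m < Suc a choose Suc k" "k \<le> a"
    using cascade_top_exists by blast
  have "cascade_top k m = a"
    unfolding cascade_top_def by (rule the_equality) (use a cascade_top_unique in blast)+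
  with a show "cascade_top k m choose Suc k \<le> m" "m < Suc (cascade_top k m) choose Suc k"
    "k \<le> cascade_top k m" by simp_all
qed

lemma cascade_top_eqI: "a choose Suc k \<le> m \<Longrightarrow> m < Suc a choose Suc k \<Longrightarrow> cascade_top k m = a"
  using cascade_top cascade_top_unique by blast

lemma cascade_top_eq_binomial_add:
  "Suc k \<le> a \<Longrightarrow> r < a choose k \<Longrightarrow> cascade_top k ((a choose Suc k) + r) = a"
  by (rule cascade_top_eqI) (simp_all add: binomial_Suc_Suc)

lemma cascade_top_mono: "m \<le> m' \<Longrightarrow> cascade_top k m \<le> cascade_top k m'"
  using cascade_top(1)[where k=k and m=m] cascade_top(2)[where k=k and m=m']
    binomial_right_mono[of "Suc (cascade_top k m')" "cascade_top k m" "Suc k"] by linarith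

lemma cascade_decomp:
  assumes "m \<noteq> 0"
  obtains a r where "Suc k \<le> a" "r < a choose k" "m = (a choose Suc k) + r" "cascade_top k m = a"
proof
  let ?a = "cascade_top k m"
  show "Suc k \<le> ?a"
    using cascade_top(2,3)[where k=k and m=m] assms by (cases "?a = k") simp_all
  show "m - (?a choose Suc k) < ?a choose k" "m = (?a choose Suc k) + (m - (?a choose Suc k))"
    using cascade_top(1,2)[where k=k and m=m] by (simp_all add: binomial_Suc_Suc)
qed simp

text \<open>Writing m = (a choose k+1) + r with r < a choose k recursively gives the
  (k+1)-binomial representation m = \<Sum> (a_i choose i); shadow_num replaces it by
  \<Sum> (a_i choose i-1), the Kruskal-Katona bound on shadows.\<close>

fun shadow_num :: "nat \<Rightarrow> nat \<Rightarrow> nat" where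
  "shadow_num 0 m = 0"
| "shadow_num (Suc k) m = (if m = 0 then 0 else
     (cascade_top k m choose k) + shadow_num k (m - (cascade_top k m choose Suc k)))"

lemma shadow_num_0_right [simp]: "shadow_num k 0 = 0"
  by (cases k) auto

declare shadow_num.simps(2) [simp del]

lemma shadow_num_cascade:
  "Suc k \<le> a \<Longrightarrow> r < a choose k \<Longrightarrow>
    shadow_num (Suc k) ((a choose Suc k) + r) = (a choose k) + shadow_num k r"
  using cascade_top_eq_binomial_add[of k a r] by (simp add: shadow_num.simps(2))

lemma shadow_num_binomial: "Suc k \<le> a \<Longrightarrow> shadow_num (Suc k) (a choose Suc k) = a choose k"
  using shadow_num_cascade[of k a 0] by simp

lemma binomial_add_shadow_num: "k < a \<Longrightarrow> (a choose k) + shadow_num k (a choose k) = Suc a choose k"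
  by (cases k) (simp_all add: shadow_num_binomial binomial_Suc_Suc)

lemma shadow_num_cascade_le:
  assumes "Suc k \<le> a" "r \<le> a choose k"
  shows "shadow_num (Suc k) ((a choose Suc k) + r) = (a choose k) + shadow_num k r"
proof (cases "r < a choose k")
  case True
  then show ?thesis by (rule shadow_num_cascade[OF assms(1)])
next
  case False
  with assms have r: "r = a choose k" by simp
  then have "shadow_num (Suc k) ((a choose Suc k) + r) = shadow_num (Suc k) (Suc a choose Suc k)"
    by (simp add: binomial_Suc_Suc add.commute)
  also have "\<dots> = Suc a choose k" using assms by (intro shadow_num_binomial) simp
  also have "\<dots> = (a choose k) + shadow_num k r" using binomial_add_shadow_num[of k a] assms r by simp
  finally show ?thesis .
qed

lemma shadow_num_decomp:
  assumes "m \<noteq> 0"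
  obtains a r where "Suc k \<le> a" "r < a choose k" "m = (a choose Suc k) + r"
    "shadow_num (Suc k) m = (a choose k) + shadow_num k r"
  using cascade_decomp[OF assms] shadow_num_cascade by metis

lemma shadow_num_mono: "m \<le> m' \<Longrightarrow> shadow_num k m \<le> shadow_num k m'"
proof (induction k arbitrary: m m')
  case 0
  then show ?case by simp
next
  case (Suc k)
  show ?case
  proof (cases "m = 0")
    case False
    then have "m' \<noteq> 0" using Suc.prems by simp
    obtain a r where ar: "Suc k \<le> a" "r < a choose k" "m = (a choose Suc k) + r" "cascade_top k m = a"
      using cascade_decomp[OF \<open>m \<noteq> 0\<close>] .
    obtain a' r' where ar': "Suc k \<le> a'" "r' < a' choose k" "m' = (a' choose Suc k) + r'"
      "cascade_top k m' = a'"
      using cascade_decomp[OF \<open>m' \<noteq> 0\<close>] .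
    have "a \<le> a'" using cascade_top_mono[OF Suc.prems, of k] ar(4) ar'(4) by simp
    show ?thesis
    proof (cases "a = a'")
      case True
      then have "shadow_num k r \<le> shadow_num k r'" using ar ar' Suc.prems by (intro Suc.IH) simp
      with ar ar' True show ?thesis by (simp add: shadow_num_cascade)
    next
      case False
      have "shadow_num (Suc k) m \<le> (a choose k) + shadow_num k (a choose k)"
        using ar Suc.IH[of r "a choose k"] by (simp add: shadow_num_cascade)
      also have "\<dots> = Suc a choose k" using ar by (intro binomial_add_shadow_num) simp
      also have "\<dots> \<le> a' choose k" using \<open>a \<le> a'\<close> False by (intro binomial_right_mono) simp
      also have "\<dots> \<le> shadow_num (Suc k) m'" using ar' by (simp add: shadow_num_cascade)
      finally show ?thesis .
    qed
  qed simp
qed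

text \<open>By Pascal's rule inc_num k m = \<Sum> (a_i + 1 choose i), the right-hand side of the theorem.\<close>

definition inc_num :: "nat \<Rightarrow> nat \<Rightarrow> nat" where
  "inc_num k m = m + shadow_num k m"

lemma inc_num_mono: "m \<le> m' \<Longrightarrow> inc_num k m \<le> inc_num k m'"
  unfolding inc_num_def using shadow_num_mono by (simp add: add_mono)

lemma inc_num_cascade:
  "Suc k \<le> a \<Longrightarrow> r < a choose k \<Longrightarrow>
    inc_num (Suc k) ((a choose Suc k) + r) = (Suc a choose Suc k) + inc_num k r"
  using shadow_num_cascade unfolding inc_num_def by (simp add: binomial_Suc_Suc)

text \<open>ones_num k m is the number of k-sets containing 1 among the first m in colexicographic
  order.\<close>

fun ones_num :: "nat \<Rightarrow> nat \<Rightarrow> nat" where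
  "ones_num 0 m = 0"
| "ones_num (Suc k) m = (if m = 0 then 0 else
     (cascade_top k m - 1 choose k) + ones_num k (m - (cascade_top k m choose Suc k)))"

lemma ones_num_0_right [simp]: "ones_num k 0 = 0"
  by (cases k) auto

declare ones_num.simps(2) [simp del]

lemma ones_num_cascade:
  "Suc k \<le> a \<Longrightarrow> r < a choose k \<Longrightarrow>
    ones_num (Suc k) ((a choose Suc k) + r) = (a - 1 choose k) + ones_num k r"
  using cascade_top_eq_binomial_add[of k a r] by (simp add: ones_num.simps(2))

lemma binomial_pred_Suc: "1 \<le> a \<Longrightarrow> a choose Suc k = (a - 1 choose k) + (a - 1 choose Suc k)"
  by (cases a) (auto simp: binomial_Suc_Suc)

lemma ones_num_le: "ones_num k m \<le> m"
proof (induction k arbitrary: m)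
  case (Suc k)
  show ?case
  proof (cases "m = 0")
    case False
    obtain a r where ar: "Suc k \<le> a" "r < a choose k" "m = (a choose Suc k) + r"
      using cascade_decomp[OF False] by metis
    have "ones_num (Suc k) m = (a - 1 choose k) + ones_num k r" using ar ones_num_cascade by simp
    also have "\<dots> \<le> (a choose Suc k) + r" using Suc.IH[of r] binomial_pred_Suc[of a k] ar by simp
    finally show ?thesis using ar by simp
  qed simp
qed simp

lemma ones_num_le_binomial: "r \<le> c choose Suc j \<Longrightarrow> ones_num (Suc j) r \<le> c - 1 choose j"
proof (induction j arbitrary: r c)
  case 0
  then show ?case by (cases "r = 0") (auto simp: ones_num.simps(2))
next
  case (Suc j)
  show ?case
  proof (cases "r = 0")
    case False
    obtain a r' where ar: "Suc (Suc j) \<le> a" "r' < a choose Suc j" "r = (a choose Suc (Suc j)) + r'"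
      using cascade_decomp[OF False] by metis
    have ones: "ones_num (Suc (Suc j)) r = (a - 1 choose Suc j) + ones_num (Suc j) r'"
      using ar ones_num_cascade by simp
    have "a choose Suc (Suc j) \<le> c choose Suc (Suc j)" using Suc.prems ar by simp
    have "a \<le> c"
    proof (rule ccontr)
      assume "\<not> a \<le> c"
      then have "Suc c choose Suc (Suc j) \<le> c choose Suc (Suc j)"
        using binomial_right_mono[of "Suc c" a "Suc (Suc j)"] \<open>a choose _ \<le> _\<close> by simp
      then have "c < Suc j" by (simp add: binomial_Suc_Suc)
      then show False using \<open>a choose _ \<le> _\<close> ar(1) by (simp add: binomial_eq_0)
    qed
    show ?thesis
    proof (cases "a = c")
      case True
      then have "r' = 0" using ar Suc.prems by simp
      with ones True show ?thesis by simp
    next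
      case False
      have "ones_num (Suc j) r' \<le> a - 1 choose j" using ar(2) by (intro Suc.IH) simp
      then have "ones_num (Suc (Suc j)) r \<le> (a - 1 choose Suc j) + (a - 1 choose j)" using ones by simp
      also have "\<dots> = a choose Suc j" using binomial_pred_Suc[of a j] ar by simp
      also have "\<dots> \<le> c - 1 choose Suc j" using \<open>a \<le> c\<close> False by (intro binomial_right_mono) simp
      finally show ?thesis .
    qed
  qed simp
qed

lemma shadow_num_le_inc_num_ones_num: "shadow_num (Suc k) m \<le> inc_num k (ones_num (Suc k) m)"
proof (induction k arbitrary: m)
  case 0
  then show ?case
    by (cases "m = 0") (auto simp: inc_num_def shadow_num.simps(2) ones_num.simps(2))
next
  case (Suc j)
  show ?case
  proof (cases "m = 0")
    case False
    obtain a r where ar: "Suc (Suc j) \<le> a" "r < a choose Suc j" "m = (a choose Suc (Suc j)) + r"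
      "shadow_num (Suc (Suc j)) m = (a choose Suc j) + shadow_num (Suc j) r"
      using shadow_num_decomp[OF False] by metis
    define y where "y = ones_num (Suc j) r"
    have ones: "ones_num (Suc (Suc j)) m = (a - 1 choose Suc j) + y"
      using ar ones_num_cascade y_def by simp
    have "y \<le> a - 1 choose j" unfolding y_def using ar(2) by (intro ones_num_le_binomial) simp
    then have "shadow_num (Suc j) ((a - 1 choose Suc j) + y) = (a - 1 choose j) + shadow_num j y"
      using ar by (intro shadow_num_cascade_le) simp_all
    then have "inc_num (Suc j) (ones_num (Suc (Suc j)) m) = (a choose Suc j) + inc_num j y"
      using ones binomial_pred_Suc[of a j] ar by (simp add: inc_num_def)
    moreover have "shadow_num (Suc j) r \<le> inc_num j y" unfolding y_def by (rule Suc.IH)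
    ultimately show ?thesis using ar by simp
  qed (simp add: inc_num_def)
qed

lemma ones_num_le_shadow_num:
  "m \<noteq> 0 \<Longrightarrow> ones_num (Suc k) m \<le> shadow_num (Suc k) (m - ones_num (Suc k) m + 1)"
proof (induction k arbitrary: m)
  case 0
  then show ?case by (simp add: shadow_num.simps(2) ones_num.simps(2))
next
  case (Suc j)
  obtain a r where ar: "Suc (Suc j) \<le> a" "r < a choose Suc j" "m = (a choose Suc (Suc j)) + r"
    using cascade_decomp[OF Suc.prems] by metis
  define y where "y = ones_num (Suc j) r"
  define t where "t = r - y + 1"
  have ones: "ones_num (Suc (Suc j)) m = (a - 1 choose Suc j) + y"
    using ar ones_num_cascade y_def by simp
  have "y \<le> a - 1 choose j" unfolding y_def using ar(2) by (intro ones_num_le_binomial) simp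
  have "y \<le> r" unfolding y_def by (rule ones_num_le)
  have pascal: "a choose Suc (Suc j) = (a - 1 choose Suc j) + (a - 1 choose Suc (Suc j))"
    using binomial_pred_Suc[of a "Suc j"] ar by simp
  have rest: "m - ones_num (Suc (Suc j)) m + 1 = (a - 1 choose Suc (Suc j)) + t"
    unfolding t_def using ones ar pascal \<open>y \<le> r\<close> by simp
  show ?case
  proof (cases "t < a - 1 choose Suc j")
    case True
    then have "Suc (Suc j) \<le> a - 1" using ar t_def by (cases "a - 1 = Suc j") auto
    then have "shadow_num (Suc (Suc j)) ((a - 1 choose Suc (Suc j)) + t)
        = (a - 1 choose Suc j) + shadow_num (Suc j) t"
      using True by (intro shadow_num_cascade) simp_all
    moreover have "y \<le> shadow_num (Suc j) t"
      using Suc.IH[of r] unfolding y_def t_def by (cases "r = 0") simp_all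
    ultimately show ?thesis using rest ones by simp
  next
    case False
    then have "a choose Suc (Suc j) \<le> (a - 1 choose Suc (Suc j)) + t" using pascal by simp
    then have "shadow_num (Suc (Suc j)) (a choose Suc (Suc j))
        \<le> shadow_num (Suc (Suc j)) ((a - 1 choose Suc (Suc j)) + t)"
      by (rule shadow_num_mono)
    moreover have "shadow_num (Suc (Suc j)) (a choose Suc (Suc j)) = a choose Suc j"
      using ar by (intro shadow_num_binomial) simp
    ultimately show ?thesis
      using rest ones \<open>y \<le> a - 1 choose j\<close> binomial_pred_Suc[of a j] ar by simp
  qed
qed

text \<open>The numerical core of the Kruskal-Katona induction: ones_num splits m at the point
  where the two available estimates cross.\<close>

lemma shadow_num_le_inc_num:
  assumes "shadow_num (Suc k) (m - f) \<le> f" "f \<le> m"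
  shows "shadow_num (Suc k) m \<le> inc_num k f"
proof (cases "ones_num (Suc k) m \<le> f")
  case True
  have "shadow_num (Suc k) m \<le> inc_num k (ones_num (Suc k) m)"
    by (rule shadow_num_le_inc_num_ones_num)
  also have "\<dots> \<le> inc_num k f" using True by (rule inc_num_mono)
  finally show ?thesis .
next
  case False
  then have "m \<noteq> 0" using ones_num_le[of "Suc k" m] by auto
  have "m - ones_num (Suc k) m + 1 \<le> m - f" using False ones_num_le[of "Suc k" m] by simp
  then have "shadow_num (Suc k) (m - ones_num (Suc k) m + 1) \<le> shadow_num (Suc k) (m - f)"
    by (rule shadow_num_mono)
  with ones_num_le_shadow_num[OF \<open>m \<noteq> 0\<close>, of k] assms False show ?thesis
    by (simp add: inc_num_def)
qed

section \<open>Shadows and colexicographic initial segments\<close>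

definition shadow :: "'a set set \<Rightarrow> 'a set set" where
  "shadow G = (\<Union>u\<in>G. (\<lambda>x. u - {x}) ` u)"

lemma shadow_iff: "v \<in> shadow G \<longleftrightarrow> (\<exists>u\<in>G. \<exists>x\<in>u. v = u - {x})"
  unfolding shadow_def by auto

lemma shadowI: "u \<in> G \<Longrightarrow> x \<in> u \<Longrightarrow> u - {x} \<in> shadow G"
  unfolding shadow_iff by blast

lemma shadow_Un: "shadow (A \<union> B) = shadow A \<union> shadow B"
  unfolding shadow_def by blast

lemma finite_shadow: "finite G \<Longrightarrow> \<forall>u\<in>G. finite u \<Longrightarrow> finite (shadow G)"
  unfolding shadow_def by auto

lemma inj_on_insert_avoiding: "(\<And>u. u \<in> A \<Longrightarrow> x \<notin> u) \<Longrightarrow> inj_on (insert x) A"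
  by (metis inj_onI insert_ident)

lemma shadow_insert_image:
  assumes "\<And>u. u \<in> A \<Longrightarrow> x \<notin> u"
  shows "shadow (insert x ` A) \<subseteq> A \<union> insert x ` shadow A"
proof
  fix v assume "v \<in> shadow (insert x ` A)"
  then obtain u y where u: "u \<in> A" "y \<in> insert x u" "v = insert x u - {y}"
    unfolding shadow_iff by blast
  show "v \<in> A \<union> insert x ` shadow A"
  proof (cases "y = x")
    case True
    then show ?thesis using u assms by auto
  next
    case False
    then have "v = insert x (u - {y})" "u - {y} \<in> shadow A" using u shadowI[of u A y] by auto
    then show ?thesis by blast
  qed
qed

lemma dsubsets_memberD: "u \<in> dsubsets d \<Longrightarrow> finite u \<and> card u = d \<and> (\<forall>x\<in>u. 1 \<le> x)"
  unfolding dsubsets_def by blast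

definition ksubsets :: "nat \<Rightarrow> nat \<Rightarrow> nat set set" where
  "ksubsets k a = {u. u \<subseteq> {1..a} \<and> card u = k}"

lemma card_ksubsets: "card (ksubsets k a) = a choose k"
  unfolding ksubsets_def using n_subsets[of "{1..a}" k] by simp

lemma finite_ksubsets: "finite (ksubsets k a)"
  unfolding ksubsets_def by (rule finite_subset[of _ "Pow {1..a}"]) auto

lemma ksubsets_0: "ksubsets 0 a = {{}}"
  unfolding ksubsets_def using finite_subset by fastforce

lemma ksubsets_mono: "a \<le> a' \<Longrightarrow> ksubsets k a \<subseteq> ksubsets k a'"
  unfolding ksubsets_def by auto

lemma finite_ksubsets_member: "u \<in> ksubsets k a \<Longrightarrow> finite u"
  unfolding ksubsets_def using finite_subset[OF _ finite_atLeastAtMost] by blast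

lemma ksubsets_empty: "a < k \<Longrightarrow> ksubsets k a = {}"
proof (intro equals0I)
  fix u assume "a < k" "u \<in> ksubsets k a"
  then show False using card_mono[OF finite_atLeastAtMost, of u 1 a] unfolding ksubsets_def by simp
qed

lemma ksubsets_subset_dsubsets: "ksubsets k a \<subseteq> dsubsets k"
  unfolding ksubsets_def dsubsets_def using finite_subset by fastforce

lemma Suc_notin_ksubsets: "u \<in> ksubsets k a \<Longrightarrow> Suc a \<notin> u"
  unfolding ksubsets_def by auto

lemma insert_ksubsets: "insert (Suc a) ` ksubsets k a \<subseteq> ksubsets (Suc k) (Suc a)"
proof
  fix v assume "v \<in> insert (Suc a) ` ksubsets k a"
  then obtain u where u: "u \<in> ksubsets k a" "v = insert (Suc a) u" by blast
  then have "finite u" "Suc a \<notin> u" using finite_ksubsets_member Suc_notin_ksubsets by blast+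
  with u show "v \<in> ksubsets (Suc k) (Suc a)" unfolding ksubsets_def by auto
qed

lemma shadow_ksubsets: "shadow (ksubsets (Suc k) a) \<subseteq> ksubsets k a"
proof
  fix v assume "v \<in> shadow (ksubsets (Suc k) a)"
  then obtain u x where u: "u \<in> ksubsets (Suc k) a" "x \<in> u" "v = u - {x}"
    unfolding shadow_iff by blast
  then have "finite u" using finite_ksubsets_member by blast
  with u show "v \<in> ksubsets k a" unfolding ksubsets_def by auto
qed

text \<open>colex_seg k m: the first m sets in the colexicographic order on k-subsets of N.\<close>

primrec colex_seg :: "nat \<Rightarrow> nat \<Rightarrow> nat set set" where
  "colex_seg 0 m = (if m = 0 then {} else {{}})"
| "colex_seg (Suc k) m = (if m = 0 then {} else ksubsets (Suc k) (cascade_top k m) \<union>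
      insert (Suc (cascade_top k m)) ` colex_seg k (m - (cascade_top k m choose Suc k)))"

lemma colex_seg_0_right [simp]: "colex_seg k 0 = {}"
  by (cases k) auto

declare colex_seg.simps(2) [simp del]

lemma colex_seg_cascade:
  "Suc k \<le> a \<Longrightarrow> r < a choose k \<Longrightarrow>
    colex_seg (Suc k) ((a choose Suc k) + r) = ksubsets (Suc k) a \<union> insert (Suc a) ` colex_seg k r"
  using cascade_top_eq_binomial_add[of k a r] by (simp add: colex_seg.simps(2))

lemma colex_seg_binomial: "colex_seg k (a choose k) = ksubsets k a"
proof (cases k)
  case 0
  then show ?thesis by (simp add: ksubsets_0)
next
  case (Suc j)
  show ?thesis
  proof (cases "a < k")
    case True
    then show ?thesis by (simp add: binomial_eq_0 ksubsets_empty)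
  next
    case False
    then have "colex_seg (Suc j) ((a choose Suc j) + 0) = ksubsets (Suc j) a"
      using Suc by (subst colex_seg_cascade) simp_all
    then show ?thesis using Suc by simp
  qed
qed

lemma cascade_top_le: "r \<noteq> 0 \<Longrightarrow> r \<le> a choose Suc k \<Longrightarrow> cascade_top k r \<le> a"
  using cascade_top_mono[of r "a choose Suc k" k] cascade_top_eq_binomial_add[of k a 0]
  by (cases "a < Suc k") (simp_all add: binomial_eq_0)

lemma colex_seg_subset_ksubsets: "r \<le> a choose k \<Longrightarrow> colex_seg k r \<subseteq> ksubsets k a"
proof (induction k arbitrary: r a)
  case 0
  then show ?case by (simp add: ksubsets_0)
next
  case (Suc k)
  show ?case
  proof (cases "r = 0")
    case False
    obtain b r' where br: "Suc k \<le> b" "r' < b choose k" "r = (b choose Suc k) + r'" "cascade_top k r = b"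
      using cascade_decomp[OF False] .
    have "b \<le> a" using cascade_top_le[OF False Suc.prems] br(4) by simp
    have split: "colex_seg (Suc k) r = ksubsets (Suc k) b \<union> insert (Suc b) ` colex_seg k r'"
      using br colex_seg_cascade by simp
    show ?thesis
    proof (cases "b = a")
      case True
      then have "r' = 0" using br Suc.prems by simp
      with split True show ?thesis by simp
    next
      case False
      have "colex_seg k r' \<subseteq> ksubsets k b" using br(2) by (intro Suc.IH) simp
      then have "insert (Suc b) ` colex_seg k r' \<subseteq> ksubsets (Suc k) (Suc b)"
        using insert_ksubsets by blast
      moreover have "ksubsets (Suc k) b \<subseteq> ksubsets (Suc k) (Suc b)" by (rule ksubsets_mono) simp
      moreover have "ksubsets (Suc k) (Suc b) \<subseteq> ksubsets (Suc k) a"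
        using \<open>b \<le> a\<close> False by (intro ksubsets_mono) simp
      ultimately show ?thesis unfolding split by blast
    qed
  qed simp
qed

lemma colex_seg_subset_ksubsets_top:
  "colex_seg (Suc k) m \<subseteq> ksubsets (Suc k) (Suc (cascade_top k m))"
  using colex_seg_subset_ksubsets cascade_top(2)[where k=k and m=m] by simp

lemma colex_seg_mono: "m \<le> m' \<Longrightarrow> colex_seg k m \<subseteq> colex_seg k m'"
proof (induction k arbitrary: m m')
  case 0
  then show ?case by simp
next
  case (Suc k)
  show ?case
  proof (cases "m = 0")
    case False
    then have "m' \<noteq> 0" using Suc.prems by simp
    obtain a r where ar: "Suc k \<le> a" "r < a choose k" "m = (a choose Suc k) + r" "cascade_top k m = a"
      using cascade_decomp[OF \<open>m \<noteq> 0\<close>] .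
    obtain a' r' where ar': "Suc k \<le> a'" "r' < a' choose k" "m' = (a' choose Suc k) + r'"
      "cascade_top k m' = a'"
      using cascade_decomp[OF \<open>m' \<noteq> 0\<close>] .
    have "a \<le> a'" using cascade_top_mono[OF Suc.prems, of k] ar(4) ar'(4) by simp
    have split': "colex_seg (Suc k) m' = ksubsets (Suc k) a' \<union> insert (Suc a') ` colex_seg k r'"
      using ar' colex_seg_cascade by simp
    show ?thesis
    proof (cases "a = a'")
      case True
      then have "r \<le> r'" using ar ar' Suc.prems by simp
      then show ?thesis using split' True ar colex_seg_cascade Suc.IH by fastforce
    next
      case False
      have "colex_seg (Suc k) m \<subseteq> ksubsets (Suc k) (Suc a)"
        using colex_seg_subset_ksubsets_top[of k m] ar(4) by simp
      also have "\<dots> \<subseteq> ksubsets (Suc k) a'" using \<open>a \<le> a'\<close> False by (intro ksubsets_mono) simp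
      finally show ?thesis using split' by blast
    qed
  qed simp
qed

lemma colex_seg_bounded: "\<exists>a. colex_seg k m \<subseteq> ksubsets k a"
  using colex_seg_subset_ksubsets_top by (cases k) (auto simp: ksubsets_0)

lemma finite_colex_seg: "finite (colex_seg k m)"
  using colex_seg_bounded finite_ksubsets finite_subset by metis

lemma colex_seg_subset_dsubsets: "colex_seg k m \<subseteq> dsubsets k"
  using colex_seg_bounded ksubsets_subset_dsubsets by blast

lemma card_colex_seg_le_binomial: "m \<le> a choose k \<Longrightarrow> card (colex_seg k m) = m"
proof (induction k arbitrary: m a)
  case 0
  then show ?case by (cases m) auto
next
  case (Suc k)
  show ?case
  proof (cases "m = 0")
    case False
    obtain b r where br: "Suc k \<le> b" "r < b choose k" "m = (b choose Suc k) + r"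
      using cascade_decomp[OF False] by metis
    have sub: "colex_seg k r \<subseteq> ksubsets k b" using br(2) by (intro colex_seg_subset_ksubsets) simp
    then have "inj_on (insert (Suc b)) (colex_seg k r)"
      by (intro inj_on_insert_avoiding) (auto dest: Suc_notin_ksubsets)
    moreover have "ksubsets (Suc k) b \<inter> insert (Suc b) ` colex_seg k r = {}"
      using Suc_notin_ksubsets by blast
    ultimately have "card (ksubsets (Suc k) b \<union> insert (Suc b) ` colex_seg k r) = (b choose Suc k) + r"
      using Suc.IH[of r b] br(2) card_ksubsets finite_ksubsets finite_colex_seg
      by (simp add: card_Un_disjoint card_image)
    then show ?thesis using br colex_seg_cascade by simp
  qed simp
qed

lemma card_colex_seg: "card (colex_seg (Suc k) m) = m"
  using cascade_top(2)[where k=k and m=m]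
  by (intro card_colex_seg_le_binomial[of m "Suc (cascade_top k m)"]) simp

lemma cascade_subset_colex_seg:
  assumes "Suc k \<le> a" "X \<subseteq> colex_seg k s" "X \<subseteq> ksubsets k a"
  shows "ksubsets (Suc k) a \<union> insert (Suc a) ` X \<subseteq> colex_seg (Suc k) ((a choose Suc k) + s)"
proof (cases "s < a choose k")
  case True
  then show ?thesis using assms colex_seg_cascade[OF assms(1) True] by blast
next
  case False
  then have "Suc a choose Suc k \<le> (a choose Suc k) + s" by (simp add: binomial_Suc_Suc)
  then have "ksubsets (Suc k) (Suc a) \<subseteq> colex_seg (Suc k) ((a choose Suc k) + s)"
    by (metis colex_seg_mono colex_seg_binomial)
  moreover have "insert (Suc a) ` X \<subseteq> ksubsets (Suc k) (Suc a)"
    using assms(3) insert_ksubsets[of a k] by blast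
  ultimately show ?thesis using ksubsets_mono[of a "Suc a" "Suc k"] by auto
qed

lemma shadow_colex_seg: "shadow (colex_seg (Suc k) m) \<subseteq> colex_seg k (shadow_num (Suc k) m)"
proof (induction k arbitrary: m)
  case 0
  have "shadow (colex_seg (Suc 0) m) \<subseteq> {{}}"
  proof
    fix v assume "v \<in> shadow (colex_seg (Suc 0) m)"
    then obtain u x where u: "u \<in> colex_seg (Suc 0) m" "x \<in> u" "v = u - {x}"
      unfolding shadow_iff by blast
    then have "card u = Suc 0" using colex_seg_subset_dsubsets unfolding dsubsets_def by blast
    with u show "v \<in> {{}}" by (auto simp: card_Suc_eq)
  qed
  moreover have "shadow (colex_seg (Suc 0) m) = {}" if "m = 0" using that by (simp add: shadow_def)
  ultimately show ?case by (auto simp: shadow_num.simps(2))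
next
  case (Suc k)
  show ?case
  proof (cases "m = 0")
    case False
    obtain a r where ar: "Suc (Suc k) \<le> a" "r < a choose Suc k" "m = (a choose Suc (Suc k)) + r"
      "shadow_num (Suc (Suc k)) m = (a choose Suc k) + shadow_num (Suc k) r"
      using shadow_num_decomp[OF False] by metis
    have r_sub: "colex_seg (Suc k) r \<subseteq> ksubsets (Suc k) a"
      using ar(2) by (intro colex_seg_subset_ksubsets) simp
    have "shadow (insert (Suc a) ` colex_seg (Suc k) r)
        \<subseteq> colex_seg (Suc k) r \<union> insert (Suc a) ` shadow (colex_seg (Suc k) r)"
      using r_sub Suc_notin_ksubsets by (intro shadow_insert_image) blast
    then have "shadow (colex_seg (Suc (Suc k)) m)
        \<subseteq> shadow (ksubsets (Suc (Suc k)) a) \<union> colex_seg (Suc k) r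
          \<union> insert (Suc a) ` shadow (colex_seg (Suc k) r)"
      using ar colex_seg_cascade[of "Suc k" a r] by (auto simp: shadow_Un)
    also have "\<dots> \<subseteq> ksubsets (Suc k) a \<union> insert (Suc a) ` shadow (colex_seg (Suc k) r)"
      using shadow_ksubsets r_sub by blast
    also have "\<dots> \<subseteq> colex_seg (Suc k) (shadow_num (Suc (Suc k)) m)"
      unfolding ar(4)
    proof (rule cascade_subset_colex_seg)
      show "shadow (colex_seg (Suc k) r) \<subseteq> colex_seg k (shadow_num (Suc k) r)" by (rule Suc.IH)
      show "shadow (colex_seg (Suc k) r) \<subseteq> ksubsets k a"
        using r_sub shadow_ksubsets unfolding shadow_def by blast
    qed (use ar in simp)
    finally show ?thesis .
  qed (simp add: shadow_def)
qed

lemma card_shadow_colex_seg: "card (shadow (colex_seg k m)) \<le> shadow_num k m"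
proof (cases k)
  case 0
  then show ?thesis by (simp add: shadow_def)
next
  case (Suc j)
  have "card (shadow (colex_seg (Suc j) m)) \<le> card (colex_seg j (shadow_num (Suc j) m))"
    using shadow_colex_seg by (intro card_mono finite_colex_seg)
  also have "\<dots> \<le> shadow_num (Suc j) m"
    by (cases j) (simp_all add: card_colex_seg)
  finally show ?thesis using Suc by simp
qed

section \<open>Compression and the Kruskal-Katona theorem\<close>

definition compress :: "nat set set \<Rightarrow> nat \<Rightarrow> nat set \<Rightarrow> nat set" where
  "compress G z u = (if z \<in> u \<and> 1 \<notin> u \<and> insert 1 (u - {z}) \<notin> G then insert 1 (u - {z}) else u)"

definition compress_family :: "nat \<Rightarrow> nat set set \<Rightarrow> nat set set" where
  "compress_family z G = compress G z ` G"

definition compressed :: "nat set set \<Rightarrow> bool" where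
  "compressed G \<longleftrightarrow> (\<forall>u\<in>G. \<forall>z\<in>u. 1 \<notin> u \<longrightarrow> insert 1 (u - {z}) \<in> G)"

definition weight :: "nat set set \<Rightarrow> nat" where
  "weight G = (\<Sum>u\<in>G. \<Sum>u)"

lemma inj_on_compress: "inj_on (compress G z) G"
proof (rule inj_onI)
  fix u v assume uv: "u \<in> G" "v \<in> G" "compress G z u = compress G z v"
  have moved_out: "compress G z w \<notin> G" if "compress G z w \<noteq> w" for w
    using that unfolding compress_def by auto
  show "u = v"
  proof (cases "compress G z u \<noteq> u \<and> compress G z v \<noteq> v")
    case True
    then have z: "z \<in> u" "z \<in> v" "1 \<notin> u" "1 \<notin> v"
      and "insert 1 (u - {z}) = insert 1 (v - {z})"
      using uv(3) unfolding compress_def by (auto split: if_splits)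
    then have "u - {z} = v - {z}" by (simp add: insert_ident)
    with z show ?thesis by (metis insert_Diff)
  next
    case False
    then consider "compress G z u = u" "compress G z v = v" | "compress G z u \<noteq> u" "compress G z v = v"
      | "compress G z u = u" "compress G z v \<noteq> v" by blast
    then show ?thesis using uv moved_out by cases metis+
  qed
qed

lemma card_compress_family: "card (compress_family z G) = card G"
  unfolding compress_family_def using inj_on_compress by (rule card_image)

lemma finite_compress_family: "finite G \<Longrightarrow> finite (compress_family z G)"
  unfolding compress_family_def by simp

lemma compress_family_subset_dsubsets:
  assumes "G \<subseteq> dsubsets k"
  shows "compress_family z G \<subseteq> dsubsets k"
proof
  fix v assume "v \<in> compress_family z G"
  then obtain u where u: "u \<in> G" "v = compress G z u" unfolding compress_family_def by blast
  then have "finite u" "card u = k" "\<forall>x\<in>u. 1 \<le> x" using assms dsubsets_memberD by blast+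
  moreover have "card (insert 1 (u - {z})) = card u" if "z \<in> u" "1 \<notin> u"
    using that \<open>finite u\<close> card_Suc_Diff1 by (simp del: card_Diff_insert)
  ultimately show "v \<in> dsubsets k"
    using u unfolding compress_def dsubsets_def by auto
qed

lemma mem_compress_family_fixed:
  assumes "v \<in> H" "z \<in> v \<Longrightarrow> 1 \<notin> v \<Longrightarrow> insert 1 (v - {z}) \<in> H"
  shows "v \<in> compress_family z H"
proof -
  have "compress H z v = v" using assms(2) unfolding compress_def by metis
  with assms(1) show ?thesis unfolding compress_family_def by (metis image_eqI)
qed

lemma mem_compress_family_moved:
  assumes "w \<in> H" "z \<in> w" "1 \<notin> w"
  shows "insert 1 (w - {z}) \<in> compress_family z H"
proof (cases "insert 1 (w - {z}) \<in> H")
  case True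
  then show ?thesis by (rule mem_compress_family_fixed) simp
next
  case False
  then have "compress H z w = insert 1 (w - {z})" using assms unfolding compress_def by simp
  with assms(1) show ?thesis unfolding compress_family_def by (metis image_eqI)
qed

lemma shadow_compress_family: "shadow (compress_family z G) \<subseteq> compress_family z (shadow G)"
proof
  fix v assume "v \<in> shadow (compress_family z G)"
  then obtain u x where u: "u \<in> G" and x: "x \<in> compress G z u" and v: "v = compress G z u - {x}"
    unfolding shadow_iff compress_family_def by blast
  show "v \<in> compress_family z (shadow G)"
  proof (cases "z \<in> u \<and> 1 \<notin> u \<and> insert 1 (u - {z}) \<notin> G")
    case True
    then have zu: "z \<in> u" "1 \<notin> u" and moved: "compress G z u = insert 1 (u - {z})"
      unfolding compress_def by simp_all
    show ?thesis
    proof (cases "x = 1")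
      case True
      then have "v = u - {z}" using moved v zu(2) by auto
      moreover have "u - {z} \<in> shadow G" using u zu(1) by (rule shadowI)
      ultimately show ?thesis by (intro mem_compress_family_fixed) simp_all
    next
      case False
      then have "x \<in> u" "x \<noteq> z" using x moved by auto
      then have "v = insert 1 ((u - {x}) - {z})" using v moved False by auto
      moreover have "u - {x} \<in> shadow G" using u \<open>x \<in> u\<close> by (rule shadowI)
      ultimately show ?thesis
        using zu \<open>x \<noteq> z\<close> mem_compress_family_moved[of "u - {x}" "shadow G" z] by simp
    qed
  next
    case not_moved: False
    then have fixed: "compress G z u = u" unfolding compress_def by auto
    have "insert 1 (v - {z}) \<in> shadow G" if zv: "z \<in> v" "1 \<notin> v"
    proof (cases "x = 1")
      case True
      then have "insert 1 (v - {z}) = u - {z}" using fixed v x zv by auto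
      moreover have "z \<in> u" using zv v fixed by simp
      ultimately show ?thesis using u by (simp add: shadowI)
    next
      case False
      then have "z \<in> u" "1 \<notin> u" using zv v fixed by auto
      then have "insert 1 (u - {z}) \<in> G" using not_moved by blast
      moreover have "x \<in> insert 1 (u - {z})" using x fixed zv v by auto
      moreover have "insert 1 (v - {z}) = insert 1 (u - {z}) - {x}" using fixed v False by auto
      ultimately show ?thesis by (simp add: shadowI)
    qed
    moreover have "v \<in> shadow G" using u x fixed v by (simp add: shadowI)
    ultimately show ?thesis by (intro mem_compress_family_fixed)
  qed
qed

lemma card_shadow_compress_family:
  assumes "finite G" "G \<subseteq> dsubsets k"
  shows "card (shadow (compress_family z G)) \<le> card (shadow G)"
proof -
  have "finite (shadow G)" using assms dsubsets_memberD by (intro finite_shadow) blast+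
  then have "card (shadow (compress_family z G)) \<le> card (compress_family z (shadow G))"
    using shadow_compress_family by (intro card_mono finite_compress_family)
  then show ?thesis by (simp add: card_compress_family)
qed

lemma sum_compress_less:
  assumes "finite u" "\<forall>x\<in>u. 1 \<le> x" "compress G z u \<noteq> u"
  shows "\<Sum>(compress G z u) < \<Sum>u"
proof -
  from assms(3) have z: "z \<in> u" "1 \<notin> u" and moved: "compress G z u = insert 1 (u - {z})"
    unfolding compress_def by (auto split: if_splits)
  have "1 \<le> z" "z \<noteq> 1" using z assms(2) by auto
  moreover have "\<Sum>u = z + \<Sum>(u - {z})" using z assms(1) by (simp add: sum.remove)
  moreover have "\<Sum>(insert 1 (u - {z})) = 1 + \<Sum>(u - {z})" using z assms(1) by simp
  ultimately show ?thesis unfolding moved by linarith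
qed

lemma sum_compress_le: "finite u \<Longrightarrow> \<forall>x\<in>u. 1 \<le> x \<Longrightarrow> \<Sum>(compress G z u) \<le> \<Sum>u"
  using sum_compress_less[of u G z] by (cases "compress G z u = u") simp_all

lemma weight_compress_family_less:
  assumes "finite G" "G \<subseteq> dsubsets k" "u \<in> G" "z \<in> u" "1 \<notin> u" "insert 1 (u - {z}) \<notin> G"
  shows "weight (compress_family z G) < weight G"
proof -
  have elem: "finite w" "\<forall>x\<in>w. 1 \<le> x" if "w \<in> G" for w
    using assms(2) that dsubsets_memberD by blast+
  have "compress G z u \<noteq> u" using assms(4-6) unfolding compress_def by auto
  have "weight (compress_family z G) = (\<Sum>w\<in>G. \<Sum>(compress G z w))"
    unfolding weight_def compress_family_def by (simp add: sum.reindex[OF inj_on_compress])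
  also have "\<dots> < (\<Sum>w\<in>G. \<Sum>w)"
  proof (rule sum_strict_mono_ex1[OF assms(1)])
    show "\<forall>w\<in>G. \<Sum>(compress G z w) \<le> \<Sum>w" using elem sum_compress_le by simp
    show "\<exists>w\<in>G. \<Sum>(compress G z w) < \<Sum>w"
      using assms(3) sum_compress_less[OF elem[OF assms(3)] \<open>compress G z u \<noteq> u\<close>] by blast
  qed
  finally show ?thesis unfolding weight_def .
qed

lemma exists_compressed:
  "finite G \<Longrightarrow> G \<subseteq> dsubsets k \<Longrightarrow> \<exists>G'. finite G' \<and> G' \<subseteq> dsubsets k \<and> card G' = card G
     \<and> card (shadow G') \<le> card (shadow G) \<and> compressed G'"
proof (induction G rule: measure_induct_rule[of weight])
  case (less G)
  show ?case
  proof (cases "compressed G")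
    case True
    with less.prems show ?thesis by blast
  next
    case False
    then obtain u z where uz: "u \<in> G" "z \<in> u" "1 \<notin> u" "insert 1 (u - {z}) \<notin> G"
      unfolding compressed_def by blast
    let ?H = "compress_family z G"
    obtain G' where G': "finite G'" "G' \<subseteq> dsubsets k" "card G' = card ?H"
        "card (shadow G') \<le> card (shadow ?H)" "compressed G'"
      using less.IH[OF weight_compress_family_less[OF less.prems uz]]
        finite_compress_family[OF less.prems(1)] compress_family_subset_dsubsets[OF less.prems(2)]
      by blast
    moreover have "card (shadow ?H) \<le> card (shadow G)"
      using card_shadow_compress_family[OF less.prems] .
    ultimately show ?thesis by (intro exI[of _ G']) (simp add: card_compress_family)
  qed
qed

definition link :: "nat set set \<Rightarrow> nat set set" where
  "link G = (\<lambda>u. u - {1}) ` {u\<in>G. 1 \<in> u}"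

definition deletion :: "nat set set \<Rightarrow> nat set set" where
  "deletion G = {u\<in>G. 1 \<notin> u}"

lemma one_notin_link: "v \<in> link G \<Longrightarrow> 1 \<notin> v"
  unfolding link_def by blast

lemma insert_one_link: "v \<in> link G \<Longrightarrow> insert 1 v \<in> G"
  unfolding link_def by (auto simp: insert_absorb)

lemma finite_link: "finite G \<Longrightarrow> finite (link G)"
  unfolding link_def by simp

lemma finite_deletion: "finite G \<Longrightarrow> finite (deletion G)"
  unfolding deletion_def by simp

lemma card_link_deletion: "finite G \<Longrightarrow> card G = card (link G) + card (deletion G)"
proof -
  assume "finite G"
  have "inj_on (\<lambda>u. u - {1}) {u\<in>G. 1 \<in> u}"
    by (rule inj_onI) (metis (no_types, lifting) insert_Diff mem_Collect_eq)
  then have "card (link G) = card {u\<in>G. 1 \<in> u}" unfolding link_def by (rule card_image)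
  moreover have "G = {u\<in>G. 1 \<in> u} \<union> deletion G" "{u\<in>G. 1 \<in> u} \<inter> deletion G = {}"
    unfolding deletion_def by auto
  ultimately show ?thesis using \<open>finite G\<close> card_Un_disjoint[of "{u\<in>G. 1 \<in> u}" "deletion G"]
    by (simp add: finite_deletion)
qed

lemma link_subset_dsubsets: "G \<subseteq> dsubsets (Suc k) \<Longrightarrow> link G \<subseteq> dsubsets k"
  unfolding link_def dsubsets_def by auto

lemma deletion_subset_dsubsets: "G \<subseteq> dsubsets k \<Longrightarrow> deletion G \<subseteq> dsubsets k"
  unfolding deletion_def by auto

lemma link_deletion_insert_one:
  assumes "\<And>u. u \<in> A \<Longrightarrow> 1 \<notin> u" "\<And>u. u \<in> B \<Longrightarrow> 1 \<notin> u"
  shows "link (insert 1 ` A \<union> B) = A" "deletion (insert 1 ` A \<union> B) = B"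
proof -
  have "{u \<in> insert 1 ` A \<union> B. 1 \<in> u} = insert 1 ` A" using assms(2) by auto
  moreover have "(\<lambda>u. u - {1}) ` insert 1 ` A = A"
    using assms(1) by (force simp: image_image)
  ultimately show "link (insert 1 ` A \<union> B) = A" unfolding link_def by simp
  show "deletion (insert 1 ` A \<union> B) = B" unfolding deletion_def using assms(2) by auto
qed

lemma shadow_link_deletion:
  "shadow G = link G \<union> insert 1 ` shadow (link G) \<union> shadow (deletion G)"
proof (intro equalityI subsetI)
  fix v assume "v \<in> shadow G"
  then obtain u x where u: "u \<in> G" "x \<in> u" "v = u - {x}" unfolding shadow_iff by blast
  show "v \<in> link G \<union> insert 1 ` shadow (link G) \<union> shadow (deletion G)"
  proof (cases "1 \<in> u")
    case True
    then have w: "u - {1} \<in> link G" using u unfolding link_def by blast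
    show ?thesis
    proof (cases "x = 1")
      case False
      then have "v = insert 1 ((u - {1}) - {x})" using u True by auto
      moreover have "(u - {1}) - {x} \<in> shadow (link G)" using w u False by (intro shadowI) auto
      ultimately show ?thesis by (intro UnI1 UnI2 image_eqI)
    qed (use u w in simp)
  next
    case False
    then have "u \<in> deletion G" using u unfolding deletion_def by blast
    then show ?thesis using u by (intro UnI2) (simp add: shadowI)
  qed
next
  fix v assume "v \<in> link G \<union> insert 1 ` shadow (link G) \<union> shadow (deletion G)"
  then consider "v \<in> link G" | w where "w \<in> shadow (link G)" "v = insert 1 w"
    | "v \<in> shadow (deletion G)"
    by blast
  then show "v \<in> shadow G"
  proof cases
    case 1
    then show ?thesis using insert_one_link[OF 1] one_notin_link[OF 1] shadowI[of "insert 1 v" G 1]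
      by simp
  next
    case 2
    then obtain w0 y where w0: "w0 \<in> link G" "y \<in> w0" "w = w0 - {y}" unfolding shadow_iff by blast
    then have "y \<noteq> 1" using one_notin_link by blast
    then have "v = insert 1 w0 - {y}" using 2 w0 by auto
    moreover have "insert 1 w0 - {y} \<in> shadow G"
      using insert_one_link[OF w0(1)] w0(2) by (intro shadowI) simp_all
    ultimately show ?thesis by simp
  next
    case 3
    then obtain u x where "u \<in> deletion G" "x \<in> u" "v = u - {x}" unfolding shadow_iff by blast
    then show ?thesis unfolding deletion_def by (simp add: shadowI)
  qed
qed

lemma card_link_add_card_shadow_link_le:
  assumes "finite G" "\<forall>u\<in>G. finite u"
  shows "card (link G) + card (shadow (link G)) \<le> card (shadow G)"
proof -
  have fin: "finite (link G)" "finite (shadow (link G))"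
    using assms unfolding link_def by (auto intro!: finite_shadow)
  have one_notin: "1 \<notin> w" if "w \<in> shadow (link G)" for w
    using that one_notin_link unfolding shadow_iff by blast
  then have "inj_on (insert 1) (shadow (link G))" by (rule inj_on_insert_avoiding)
  moreover have "link G \<inter> insert 1 ` shadow (link G) = {}" using one_notin_link by blast
  ultimately have "card (link G) + card (shadow (link G)) = card (link G \<union> insert 1 ` shadow (link G))"
    using fin by (simp add: card_Un_disjoint card_image)
  also have "\<dots> \<le> card (shadow G)"
  proof (rule card_mono)
    show "finite (shadow G)" using assms by (rule finite_shadow)
    show "link G \<union> insert 1 ` shadow (link G) \<subseteq> shadow G"
      unfolding shadow_link_deletion[of G] by (rule Un_upper1)
  qed
  finally show ?thesis .
qed

lemma card_shadow_le_link_deletion: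
  assumes "finite G" "\<forall>u\<in>G. finite u"
  shows "card (shadow G) \<le> card (link G \<union> shadow (deletion G)) + card (shadow (link G))"
proof -
  have "finite (shadow (link G))"
    using assms unfolding link_def by (intro finite_shadow) auto
  then have "card (insert 1 ` shadow (link G)) \<le> card (shadow (link G))" by (rule card_image_le)
  moreover have "shadow G = (link G \<union> shadow (deletion G)) \<union> insert 1 ` shadow (link G)"
    unfolding shadow_link_deletion[of G] by blast
  ultimately show ?thesis using card_Un_le by (metis add_left_mono le_trans)
qed

lemma shadow_deletion_compressed: "compressed G \<Longrightarrow> shadow (deletion G) \<subseteq> link G"
proof
  fix v assume "compressed G" "v \<in> shadow (deletion G)"
  then obtain u x where u: "u \<in> G" "1 \<notin> u" "x \<in> u" "v = u - {x}"
    unfolding shadow_iff deletion_def by blast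
  then have "insert 1 v \<in> G" using \<open>compressed G\<close> unfolding compressed_def by blast
  moreover have "1 \<notin> v" using u by simp
  ultimately show "v \<in> link G" unfolding link_def by (intro image_eqI[of _ _ "insert 1 v"]) auto
qed

lemma link_nonempty_compressed:
  assumes "compressed G" "G \<subseteq> dsubsets (Suc k)" "G \<noteq> {}"
  shows "link G \<noteq> {}"
proof -
  obtain u where "u \<in> G" using assms(3) by blast
  then have "card u = Suc k" using assms(2) dsubsets_memberD by blast
  then obtain z where "z \<in> u" by (metis card.empty ex_in_conv nat.distinct(1))
  then have "insert 1 (u - {z}) \<in> G \<or> 1 \<in> u"
    using assms(1) \<open>u \<in> G\<close> unfolding compressed_def by blast
  then obtain w where "w \<in> G" "1 \<in> w" using \<open>u \<in> G\<close> by blast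
  then have "w - {1} \<in> link G" unfolding link_def by blast
  then show ?thesis by blast
qed

lemma shadow_num_le_card_shadow_compressed:
  assumes "finite G" "G \<subseteq> dsubsets (Suc j)" "compressed G"
    and deletion_bound: "shadow_num (Suc j) (card (deletion G)) \<le> card (shadow (deletion G))"
    and link_bound: "shadow_num j (card (link G)) \<le> card (shadow (link G))"
  shows "shadow_num (Suc j) (card G) \<le> card (shadow G)"
proof -
  have card_G: "card G = card (link G) + card (deletion G)" using assms(1) by (rule card_link_deletion)
  have "card (shadow (deletion G)) \<le> card (link G)"
    using shadow_deletion_compressed[OF assms(3)] by (intro card_mono finite_link assms(1))
  with deletion_bound have "shadow_num (Suc j) (card G - card (link G)) \<le> card (link G)"
    using card_G by simp
  then have "shadow_num (Suc j) (card G) \<le> card (link G) + shadow_num j (card (link G))"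
    using card_G shadow_num_le_inc_num[of j "card G" "card (link G)"] by (simp add: inc_num_def)
  also have "\<dots> \<le> card (shadow G)"
  proof -
    have "\<forall>u\<in>G. finite u" using assms(2) dsubsets_memberD by blast
    then show ?thesis using link_bound card_link_add_card_shadow_link_le[OF assms(1)] by simp
  qed
  finally show ?thesis .
qed

theorem kruskal_katona: "finite G \<Longrightarrow> G \<subseteq> dsubsets k \<Longrightarrow> shadow_num k (card G) \<le> card (shadow G)"
proof (induction k arbitrary: G)
  case 0
  then show ?case by simp
next
  case (Suc j)
  from Suc.prems show ?case
  proof (induction "card G" arbitrary: G rule: less_induct)
    case less
    obtain G' where G': "finite G'" "G' \<subseteq> dsubsets (Suc j)" "card G' = card G"
      "card (shadow G') \<le> card (shadow G)" "compressed G'"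
      using exists_compressed[OF less.prems] by blast
    have "shadow_num (Suc j) (card G') \<le> card (shadow G')"
    proof (cases "G' = {}")
      case False
      then have "link G' \<noteq> {}" using G'(2,5) by (intro link_nonempty_compressed)
      then have "card (link G') > 0" using G'(1) finite_link card_gt_0_iff by blast
      then have "card (deletion G') < card G" using G'(1,3) card_link_deletion[of G'] by simp
      show ?thesis
      proof (rule shadow_num_le_card_shadow_compressed[OF G'(1,2,5)])
        show "shadow_num (Suc j) (card (deletion G')) \<le> card (shadow (deletion G'))"
          using \<open>card (deletion G') < card G\<close> finite_deletion[OF G'(1)]
            deletion_subset_dsubsets[OF G'(2)] by (rule less.hyps)
        show "shadow_num j (card (link G')) \<le> card (shadow (link G'))"
          using finite_link[OF G'(1)] link_subset_dsubsets[OF G'(2)] by (rule Suc.IH)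
      qed
    qed simp
    with G' show ?case by simp
  qed
qed

section \<open>A recursive inequality for Inc^[d]\<close>

definition succ_family :: "nat set set \<Rightarrow> nat set set" where
  "succ_family A = image Suc ` A"

lemma card_succ_family: "card (succ_family A) = card A"
proof -
  have "inj (image Suc)" by (rule injI) (simp add: inj_image_eq_iff)
  then show ?thesis unfolding succ_family_def by (simp add: card_image inj_on_subset)
qed

lemma finite_succ_family: "finite A \<Longrightarrow> finite (succ_family A)"
  unfolding succ_family_def by simp

lemma succ_family_mono: "A \<subseteq> B \<Longrightarrow> succ_family A \<subseteq> succ_family B"
  unfolding succ_family_def by (rule image_mono)

lemma shadow_succ_family: "shadow (succ_family A) = succ_family (shadow A)"
proof (intro equalityI subsetI)
  fix v assume "v \<in> shadow (succ_family A)"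
  then obtain u y where "u \<in> A" "y \<in> u" "v = Suc ` u - {Suc y}"
    unfolding shadow_iff succ_family_def by blast
  then have "v = Suc ` (u - {y})" "u - {y} \<in> shadow A" by (auto intro: shadowI)
  then show "v \<in> succ_family (shadow A)" unfolding succ_family_def by blast
next
  fix v assume "v \<in> succ_family (shadow A)"
  then obtain w where "w \<in> shadow A" "v = Suc ` w" unfolding succ_family_def by blast
  then obtain u y where "u \<in> A" "y \<in> u" "v = Suc ` (u - {y})" unfolding shadow_iff by blast
  then have "v = Suc ` u - {Suc y}" "Suc ` u \<in> succ_family A" "Suc y \<in> Suc ` u"
    unfolding succ_family_def by auto
  then show "v \<in> shadow (succ_family A)" by (simp add: shadowI)
qed

lemma succ_family_subset_dsubsets: "A \<subseteq> dsubsets k \<Longrightarrow> succ_family A \<subseteq> dsubsets k"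
  unfolding succ_family_def dsubsets_def by (auto simp: card_image)

lemma one_notin_succ_family: "A \<subseteq> dsubsets k \<Longrightarrow> v \<in> succ_family A \<Longrightarrow> 1 \<notin> v"
  unfolding succ_family_def dsubsets_def by auto

lemma insert_one_subset_dsubsets:
  assumes "A \<subseteq> dsubsets k" "\<And>u. u \<in> A \<Longrightarrow> 1 \<notin> u"
  shows "insert 1 ` A \<subseteq> dsubsets (Suc k)"
  using assms unfolding dsubsets_def by auto

text \<open>Proved by applying the Kruskal-Katona theorem to the cone over the first f sets of size j
  together with a shifted copy of the first x sets of size j+1.\<close>

lemma shadow_num_add_le: "shadow_num (Suc j) (x + f) \<le> shadow_num j f + max f (shadow_num (Suc j) x)"
proof (cases j)
  case 0
  then show ?thesis by (simp add: shadow_num.simps(2))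
next
  case (Suc i)
  define A where "A = succ_family (colex_seg (Suc i) f)"
  define B where "B = succ_family (colex_seg (Suc (Suc i)) x)"
  define M where "M = max f (shadow_num (Suc (Suc i)) x)"
  define G where "G = insert 1 ` A \<union> B"
  have A: "finite A" "card A = f" "A \<subseteq> dsubsets (Suc i)"
    unfolding A_def using finite_colex_seg card_colex_seg colex_seg_subset_dsubsets
    by (simp_all add: finite_succ_family card_succ_family succ_family_subset_dsubsets)
  have B: "finite B" "card B = x" "B \<subseteq> dsubsets (Suc (Suc i))"
    unfolding B_def using finite_colex_seg card_colex_seg colex_seg_subset_dsubsets
    by (simp_all add: finite_succ_family card_succ_family succ_family_subset_dsubsets)
  have one_notin: "\<And>u. u \<in> A \<Longrightarrow> 1 \<notin> u" "\<And>u. u \<in> B \<Longrightarrow> 1 \<notin> u"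
    unfolding A_def B_def using one_notin_succ_family colex_seg_subset_dsubsets by blast+
  have G: "link G = A" "deletion G = B"
    unfolding G_def using link_deletion_insert_one[OF one_notin] by simp_all
  have "finite G" unfolding G_def using A(1) B(1) by simp
  moreover have "G \<subseteq> dsubsets (Suc (Suc i))"
    unfolding G_def using A(3) B(3) one_notin(1) insert_one_subset_dsubsets by blast
  ultimately have "shadow_num (Suc (Suc i)) (card G) \<le> card (shadow G)" by (rule kruskal_katona)
  moreover have "card G = x + f" using card_link_deletion[OF \<open>finite G\<close>] G A(2) B(2) by simp
  ultimately have "shadow_num (Suc (Suc i)) (x + f) \<le> card (shadow G)" by simp
  also have "\<dots> \<le> card (A \<union> shadow B) + card (shadow A)"
  proof -
    have "\<forall>u\<in>G. finite u" using \<open>G \<subseteq> _\<close> dsubsets_memberD by blast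
    then show ?thesis using card_shadow_le_link_deletion[OF \<open>finite G\<close>] unfolding G by simp
  qed
  also have "card (A \<union> shadow B) \<le> M"
  proof -
    have "shadow (colex_seg (Suc (Suc i)) x) \<subseteq> colex_seg (Suc i) M"
      using shadow_colex_seg[of "Suc i" x] colex_seg_mono[of "shadow_num (Suc (Suc i)) x" M "Suc i"]
      unfolding M_def by simp
    moreover have "colex_seg (Suc i) f \<subseteq> colex_seg (Suc i) M" unfolding M_def by (simp add: colex_seg_mono)
    ultimately have "A \<union> shadow B \<subseteq> succ_family (colex_seg (Suc i) M)"
      unfolding A_def B_def shadow_succ_family using succ_family_mono by blast
    then have "card (A \<union> shadow B) \<le> card (succ_family (colex_seg (Suc i) M))"
      by (intro card_mono finite_succ_family finite_colex_seg)
    then show ?thesis by (simp add: card_succ_family card_colex_seg)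
  qed
  also have "card (shadow A) \<le> shadow_num (Suc i) f"
    unfolding A_def shadow_succ_family card_succ_family by (rule card_shadow_colex_seg)
  finally show ?thesis unfolding M_def Suc by simp
qed

lemma inc_num_add_le:
  assumes "f \<le> m"
  shows "inc_num (Suc k) m \<le> inc_num k f + max m (inc_num (Suc k) (m - f))"
proof -
  have "shadow_num (Suc k) m \<le> shadow_num k f + max f (shadow_num (Suc k) (m - f))"
    using shadow_num_add_le[of k "m - f" f] assms by simp
  moreover have "f + max m (m - f + shadow_num (Suc k) (m - f)) = m + max f (shadow_num (Suc k) (m - f))"
    using assms by (simp add: max_def) arith
  ultimately show ?thesis unfolding inc_num_def by simp
qed

section \<open>Families generated by increasing maps\<close>

lemma Inc1D:
  assumes "pi \<in> Inc1" "1 \<le> j"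
  shows "1 \<le> pi j" "pi j < pi (Suc j)" "pi j \<le> Suc j"
  using assms unfolding Inc1_def by auto

lemma Inc1_ge_2:
  assumes "pi \<in> Inc1" "2 \<le> j"
  shows "2 \<le> pi j"
proof -
  have "1 \<le> pi (j - 1)" "pi (j - 1) < pi (Suc (j - 1))" using assms Inc1D[of pi "j - 1"] by simp_all
  moreover have "Suc (j - 1) = j" using assms(2) by simp
  ultimately show ?thesis by simp
qed

lemma IncFI: "u \<in> F \<Longrightarrow> pi \<in> Inc1 \<Longrightarrow> pi ` u \<in> IncF F"
  unfolding IncF_def by blast

lemma IncFE:
  assumes "v \<in> IncF F"
  obtains u pi where "u \<in> F" "pi \<in> Inc1" "v = pi ` u"
  using assms unfolding IncF_def by blast

lemma subset_IncF: "F \<subseteq> IncF F"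
proof
  fix u assume "u \<in> F"
  moreover have "id \<in> Inc1" unfolding Inc1_def by simp
  ultimately show "u \<in> IncF F" using IncFI[of u F id] by simp
qed

lemma succ_family_subset_IncF: "succ_family F \<subseteq> IncF F"
proof
  fix v assume "v \<in> succ_family F"
  then obtain u where "u \<in> F" "v = Suc ` u" unfolding succ_family_def by blast
  moreover have "Suc \<in> Inc1" unfolding Inc1_def by simp
  ultimately show "v \<in> IncF F" using IncFI by simp
qed

lemma IncF_mono: "F \<subseteq> H \<Longrightarrow> IncF F \<subseteq> IncF H"
  by (auto elim!: IncFE intro!: IncFI)

lemma finite_IncF:
  assumes "finite F" "F \<subseteq> dsubsets d"
  shows "finite (IncF F)"
proof -
  define N where "N = Max (\<Union>F)"
  have fin: "finite (\<Union>F)" using assms dsubsets_memberD by blast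
  have "v \<subseteq> {..Suc N}" if "v \<in> IncF F" for v
  proof
    fix y assume "y \<in> v"
    obtain u pi where u: "u \<in> F" "pi \<in> Inc1" "v = pi ` u" using \<open>v \<in> IncF F\<close> by (rule IncFE)
    then obtain x where x: "x \<in> u" "y = pi x" using \<open>y \<in> v\<close> by blast
    have "1 \<le> x" using x u assms(2) dsubsets_memberD by blast
    moreover have "x \<le> N" unfolding N_def using fin x u by (intro Max_ge) auto
    ultimately show "y \<in> {..Suc N}" using Inc1D(3)[OF u(2), of x] x by simp
  qed
  then have "IncF F \<subseteq> Pow {..Suc N}" by blast
  then show ?thesis by (rule finite_subset) simp
qed

lemma one_notin_IncF:
  assumes "\<And>u x. u \<in> F \<Longrightarrow> x \<in> u \<Longrightarrow> 2 \<le> x" "v \<in> IncF F"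
  shows "1 \<notin> v"
proof
  assume "1 \<in> v"
  obtain u pi where u: "u \<in> F" "pi \<in> Inc1" "v = pi ` u" using assms(2) by (rule IncFE)
  then obtain x where "x \<in> u" "pi x = 1" using \<open>1 \<in> v\<close> by auto
  then show False using Inc1_ge_2[OF u(2) assms(1)[OF u(1)]] by fastforce
qed

text \<open>Extending an increasing map by 1 \<mapsto> 1 turns Inc(link F) into part of Inc(F).\<close>

lemma insert_one_IncF_link: "insert 1 ` IncF (link F) \<subseteq> IncF F"
proof
  fix v assume "v \<in> insert 1 ` IncF (link F)"
  then obtain v' where "v' \<in> IncF (link F)" "v = insert 1 v'" by blast
  then obtain w pi where w: "w \<in> link F" "pi \<in> Inc1" "v = insert 1 (pi ` w)" by (auto elim: IncFE)
  have "2 \<le> pi 2" using w(2) by (rule Inc1_ge_2) simp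
  then have "pi(1 := 1) \<in> Inc1" using w(2) unfolding Inc1_def by (auto simp: numeral_2_eq_2)
  moreover have "insert 1 w \<in> F" using w(1) by (rule insert_one_link)
  moreover have "v = (pi(1 := 1)) ` insert 1 w" using w one_notin_link[OF w(1)] by auto
  ultimately show "v \<in> IncF F" using IncFI by metis
qed

text \<open>Conjugating by the shift j \<mapsto> j + 1 sends Inc(H) into Inc of the shifted family.\<close>

lemma succ_family_IncF:
  assumes "H \<subseteq> dsubsets d"
  shows "succ_family (IncF H) \<subseteq> IncF (succ_family H)"
proof
  fix v assume "v \<in> succ_family (IncF H)"
  then obtain v' where "v' \<in> IncF H" "v = Suc ` v'" unfolding succ_family_def by blast
  then obtain u pi where u: "u \<in> H" "pi \<in> Inc1" "v = Suc ` pi ` u" by (auto elim: IncFE)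
  define pi' where "pi' j = (if j \<le> 1 then 1 else Suc (pi (j - 1)))" for j
  have "pi' \<in> Inc1"
    unfolding Inc1_def
  proof (intro CollectI allI impI conjI)
    fix j :: nat assume "1 \<le> j"
    show "1 \<le> pi' j" unfolding pi'_def by simp
    show "pi' j < pi' (Suc j)" "pi' j \<le> j + 1"
      using Inc1D[OF u(2), of "j - 1"] Inc1D(1)[OF u(2), of 1] \<open>1 \<le> j\<close> unfolding pi'_def
      by (cases "j = 1"; simp)+
  qed
  moreover have "pi' ` Suc ` u = Suc ` pi ` u" unfolding pi'_def image_image
  proof (intro image_cong refl)
    fix x assume "x \<in> u"
    then have "1 \<le> x" using u(1) assms dsubsets_memberD by blast
    then show "(if Suc x \<le> 1 then 1 else Suc (pi (Suc x - 1))) = Suc (pi x)" by simp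
  qed
  moreover have "Suc ` u \<in> succ_family H" using u(1) unfolding succ_family_def by blast
  ultimately show "v \<in> IncF (succ_family H)" using u(3) IncFI by metis
qed

lemma weight_deletion_less:
  assumes "finite F" "u \<in> F" "1 \<in> u" "finite u"
  shows "weight (deletion F) < weight F"
proof -
  have "F = {u\<in>F. 1 \<in> u} \<union> deletion F" "{u\<in>F. 1 \<in> u} \<inter> deletion F = {}"
    unfolding deletion_def by auto
  then have "weight F = (\<Sum>w\<in>{u\<in>F. 1 \<in> u}. \<Sum>w) + weight (deletion F)"
    unfolding weight_def using assms(1) by (metis finite_Un sum.union_disjoint)
  moreover have "0 < \<Sum>u" using assms(3,4) by (metis gr_zeroI less_one sum_eq_0_iff)
  then have "0 < (\<Sum>w\<in>{u\<in>F. 1 \<in> u}. \<Sum>w)"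
    using assms by (intro ordered_comm_monoid_add_class.sum_pos2[of _ u]) auto
  ultimately show ?thesis by simp
qed

lemma weight_succ_family:
  assumes "\<forall>u\<in>H. finite u"
  shows "weight (succ_family H) = weight H + (\<Sum>u\<in>H. card u)"
proof -
  have "inj_on (image Suc) H" by (rule inj_onI) (simp add: inj_image_eq_iff)
  then have "weight (succ_family H) = (\<Sum>u\<in>H. \<Sum>(Suc ` u))"
    unfolding weight_def succ_family_def by (simp add: sum.reindex)
  also have "\<dots> = (\<Sum>u\<in>H. \<Sum>u + card u)"
  proof (intro sum.cong refl)
    fix u assume "u \<in> H"
    show "\<Sum>(Suc ` u) = \<Sum>u + card u" using sum_Suc[of "\<lambda>x. x" u] by (simp add: sum.reindex)
  qed
  finally show ?thesis unfolding weight_def by (simp add: sum.distrib)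
qed

lemma succ_family_pred_family:
  assumes "finite F" "F \<subseteq> dsubsets d" "\<And>u. u \<in> F \<Longrightarrow> 1 \<notin> u"
  obtains H where "F = succ_family H" "finite H" "H \<subseteq> dsubsets d"
proof
  define H where "H = image (\<lambda>x. x - 1) ` F"
  have ge2: "2 \<le> x" if "u \<in> F" "x \<in> u" for u x
  proof -
    have "1 \<le> x" "x \<noteq> 1" using that assms(2,3) dsubsets_memberD[of u d] by auto
    then show ?thesis by simp
  qed
  have succ_pred: "Suc ` (\<lambda>x. x - 1) ` u = u" if "u \<in> F" for u
  proof -
    have "Suc ` (\<lambda>x. x - 1) ` u = (\<lambda>x. Suc (x - 1)) ` u" by (simp add: image_image)
    also have "\<dots> = (\<lambda>x. x) ` u"
    proof (rule image_cong[OF refl])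
      fix x assume "x \<in> u"
      then show "Suc (x - 1) = x" using ge2[OF that \<open>x \<in> u\<close>] by simp
    qed
    also have "\<dots> = u" by simp
    finally show ?thesis .
  qed
  have "succ_family H = (\<lambda>u. Suc ` (\<lambda>x. x - 1) ` u) ` F"
    unfolding succ_family_def H_def by (rule image_image)
  also have "\<dots> = (\<lambda>u. u) ` F" by (rule image_cong[OF refl]) (rule succ_pred)
  finally show "F = succ_family H" by simp
  show "finite H" unfolding H_def using assms(1) by simp
  show "H \<subseteq> dsubsets d"
  proof
    fix v assume "v \<in> H"
    then obtain u where u: "u \<in> F" "v = (\<lambda>x. x - 1) ` u" unfolding H_def by blast
    have "inj_on (\<lambda>x. x - 1) u" by (rule inj_onI) (use ge2[OF u(1)] in force)
    moreover have "card u = d" using u(1) assms(2) dsubsets_memberD by blast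
    ultimately have "card v = d" using u(2) by (simp add: card_image)
    moreover have "finite v" using u assms(2) dsubsets_memberD by blast
    moreover have "1 \<le> y" if "y \<in> v" for y
    proof -
      obtain x where "x \<in> u" "y = x - 1" using u(2) \<open>y \<in> v\<close> by blast
      with ge2[OF u(1)] show ?thesis by fastforce
    qed
    ultimately show "v \<in> dsubsets d" unfolding dsubsets_def by blast
  qed
qed

lemma link_member_ge_2: "F \<subseteq> dsubsets d \<Longrightarrow> w \<in> link F \<Longrightarrow> x \<in> w \<Longrightarrow> 2 \<le> x"
  unfolding link_def dsubsets_def by force

lemma deletion_member_ge_2:
  assumes "F \<subseteq> dsubsets d" "u \<in> deletion F" "x \<in> u"
  shows "2 \<le> x"
proof -
  have "1 \<le> x" "x \<noteq> 1" using assms dsubsets_memberD unfolding deletion_def by auto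
  then show ?thesis by simp
qed

lemma inc_num_le_card_IncF_split:
  assumes "finite F" "F \<subseteq> dsubsets (Suc k)"
    and link_bound: "inc_num k (card (link F)) \<le> card (IncF (link F))"
    and deletion_bound: "inc_num (Suc k) (card (deletion F)) \<le> card (IncF (deletion F))"
  shows "inc_num (Suc k) (card F) \<le> card (IncF F)"
proof -
  define R where "R = succ_family F \<union> IncF (deletion F)"
  have fin: "finite (IncF (link F))" "finite R"
    using finite_IncF[OF finite_link link_subset_dsubsets] finite_succ_family
      finite_IncF[OF finite_deletion deletion_subset_dsubsets] assms(1,2)
    unfolding R_def by blast+
  have "1 \<notin> v" if "v \<in> R" for v
    using that one_notin_succ_family[OF assms(2)] one_notin_IncF deletion_member_ge_2[OF assms(2)]
    unfolding R_def by blast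
  then have disj: "insert 1 ` IncF (link F) \<inter> R = {}" by blast
  have "inj_on (insert 1) (IncF (link F))"
    using one_notin_IncF link_member_ge_2[OF assms(2)] by (intro inj_on_insert_avoiding) blast
  then have "card (IncF (link F)) + card R = card (insert 1 ` IncF (link F) \<union> R)"
    using fin disj by (simp add: card_Un_disjoint card_image)
  also have "\<dots> \<le> card (IncF F)"
    unfolding R_def using insert_one_IncF_link succ_family_subset_IncF IncF_mono[of "deletion F" F]
    by (intro card_mono finite_IncF[OF assms(1,2)]) (auto simp: deletion_def)
  finally have card_IncF: "card (IncF (link F)) + card R \<le> card (IncF F)" .
  have "card F \<le> card R"
    using card_mono[OF fin(2), of "succ_family F"] card_succ_family[of F] unfolding R_def by simp
  moreover have "card (IncF (deletion F)) \<le> card R"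
    using card_mono[OF fin(2), of "IncF (deletion F)"] unfolding R_def by simp
  moreover have "card (link F) \<le> card F" "card F - card (link F) = card (deletion F)"
    using card_link_deletion[OF assms(1)] by simp_all
  ultimately have "inc_num (Suc k) (card F)
      \<le> inc_num k (card (link F)) + max (card F) (inc_num (Suc k) (card (deletion F)))"
    using inc_num_add_le by metis
  also have "\<dots> \<le> card (IncF (link F)) + card R"
    using link_bound deletion_bound \<open>card F \<le> card R\<close> \<open>card (IncF (deletion F)) \<le> card R\<close> by simp
  finally show ?thesis using card_IncF by simp
qed

theorem inc_num_le_card_IncF: "finite F \<Longrightarrow> F \<subseteq> dsubsets d \<Longrightarrow> inc_num d (card F) \<le> card (IncF F)"
proof (induction d arbitrary: F)
  case 0
  then show ?case using card_mono[OF finite_IncF subset_IncF] by (simp add: inc_num_def)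
next
  case (Suc k)
  from Suc.prems show ?case
  proof (induction F rule: measure_induct_rule[of weight])
    case (less F)
    show ?case
    proof (cases "\<exists>u\<in>F. 1 \<in> u")
      case True
      then obtain u where u: "u \<in> F" "1 \<in> u" by blast
      then have "finite u" using less.prems(2) dsubsets_memberD by blast
      with less.prems(1) u have "weight (deletion F) < weight F" by (rule weight_deletion_less)
      then have "inc_num (Suc k) (card (deletion F)) \<le> card (IncF (deletion F))"
        using finite_deletion[OF less.prems(1)] deletion_subset_dsubsets[OF less.prems(2)]
        by (rule less.IH)
      moreover have "inc_num k (card (link F)) \<le> card (IncF (link F))"
        using finite_link[OF less.prems(1)] link_subset_dsubsets[OF less.prems(2)] by (rule Suc.IH)
      ultimately show ?thesis using inc_num_le_card_IncF_split[OF less.prems] by blast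
    next
      case False
      then obtain H where H: "F = succ_family H" "finite H" "H \<subseteq> dsubsets (Suc k)"
        using succ_family_pred_family[OF less.prems] by blast
      show ?thesis
      proof (cases "H = {}")
        case False
        have "\<forall>u\<in>H. finite u \<and> card u = Suc k" using H(3) dsubsets_memberD by blast
        then have "weight F = weight H + Suc k * card H"
          unfolding H(1) by (simp add: weight_succ_family)
        moreover have "0 < card H" using False H(2) by (simp add: card_gt_0_iff)
        ultimately have "weight H < weight F" by simp
        then have "inc_num (Suc k) (card H) \<le> card (IncF H)" using H(2,3) by (rule less.IH)
        also have "\<dots> = card (succ_family (IncF H))" by (simp add: card_succ_family)
        also have "\<dots> \<le> card (IncF F)"
          using succ_family_IncF[OF H(3)] H(1) by (intro card_mono finite_IncF[OF less.prems]) simp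
        finally show ?thesis using H(1) by (simp add: card_succ_family)
      qed (use H(1) in \<open>simp add: succ_family_def inc_num_def\<close>)
    qed
  qed
qed

section \<open>The d-binomial representation\<close>

lemma dbinrep_ge:
  assumes "dbinrep e m s a" "s \<le> i" "i \<le> e"
  shows "i \<le> a i"
  using assms(2,3)
proof (induction i rule: dec_induct)
  case base
  then show ?case using assms(1) unfolding dbinrep_def by simp
next
  case (step n)
  then have "a n < a (Suc n)" using assms(1) unfolding dbinrep_def by simp
  with step show ?case by simp
qed

lemma dbinrep_drop_top:
  assumes "dbinrep (Suc e) m s a" "s \<le> e"
  shows "dbinrep e (m - (a (Suc e) choose Suc e)) s a"
    and "m = (a (Suc e) choose Suc e) + (m - (a (Suc e) choose Suc e))"
proof -
  have "m = (\<Sum>i=s..e. a i choose i) + (a (Suc e) choose Suc e)"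
    using assms unfolding dbinrep_def by simp
  then show "m = (a (Suc e) choose Suc e) + (m - (a (Suc e) choose Suc e))"
    and "dbinrep e (m - (a (Suc e) choose Suc e)) s a"
    using assms unfolding dbinrep_def by auto
qed

lemma dbinrep_top_le:
  assumes "dbinrep e m s a"
  shows "a e choose e \<le> m"
proof -
  have "e \<in> {s..e}" using assms unfolding dbinrep_def by simp
  then have "a e choose e \<le> (\<Sum>i=s..e. a i choose i)" by (rule member_le_sum) simp_all
  then show ?thesis using assms unfolding dbinrep_def by simp
qed

lemma dbinrep_less: "dbinrep e m s a \<Longrightarrow> m < Suc (a e) choose e"
proof (induction e arbitrary: m)
  case 0
  then show ?case unfolding dbinrep_def by auto
next
  case (Suc e)
  have top: "Suc e \<le> a (Suc e)" using dbinrep_ge[OF Suc.prems, of "Suc e"] Suc.prems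
    unfolding dbinrep_def by simp
  show ?case
  proof (cases "s = Suc e")
    case True
    then have "m = a (Suc e) choose Suc e" using Suc.prems unfolding dbinrep_def by simp
    moreover have "0 < a (Suc e) choose e" using top by simp
    ultimately show ?thesis by (simp add: binomial_Suc_Suc)
  next
    case False
    then have "s \<le> e" using Suc.prems unfolding dbinrep_def by simp
    note rest = dbinrep_drop_top[OF Suc.prems this]
    have "a e < a (Suc e)" using Suc.prems \<open>s \<le> e\<close> unfolding dbinrep_def by simp
    then have "Suc (a e) choose e \<le> a (Suc e) choose e" by (intro binomial_right_mono) simp
    then show ?thesis using Suc.IH[OF rest(1)] rest(2) by (simp add: binomial_Suc_Suc)
  qed
qed

lemma dbinrep_sum_eq_inc_num: "dbinrep e m s a \<Longrightarrow> (\<Sum>i=s..e. (a i + 1) choose i) = inc_num e m"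
proof (induction e arbitrary: m)
  case 0
  then show ?case unfolding dbinrep_def by auto
next
  case (Suc e)
  have top: "Suc e \<le> a (Suc e)" using dbinrep_ge[OF Suc.prems, of "Suc e"] Suc.prems
    unfolding dbinrep_def by simp
  show ?case
  proof (cases "s = Suc e")
    case True
    then have "m = (a (Suc e) choose Suc e) + 0" using Suc.prems unfolding dbinrep_def by simp
    moreover have "0 < a (Suc e) choose e" using top by simp
    ultimately have "inc_num (Suc e) m = (Suc (a (Suc e)) choose Suc e) + inc_num e 0"
      using inc_num_cascade[OF top, of 0] by simp
    then show ?thesis using True by (simp add: inc_num_def)
  next
    case False
    then have "s \<le> e" using Suc.prems unfolding dbinrep_def by simp
    note rest = dbinrep_drop_top[OF Suc.prems this]
    define r where "r = m - (a (Suc e) choose Suc e)"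
    have "a e < a (Suc e)" using Suc.prems \<open>s \<le> e\<close> unfolding dbinrep_def by simp
    then have "r < a (Suc e) choose e"
      using dbinrep_less[OF rest(1)] binomial_right_mono[of "Suc (a e)" "a (Suc e)" e]
      unfolding r_def by simp
    then have "inc_num (Suc e) m = (Suc (a (Suc e)) choose Suc e) + inc_num e r"
      using rest(2) top inc_num_cascade unfolding r_def by metis
    also have "inc_num e r = (\<Sum>i=s..e. (a i + 1) choose i)" using Suc.IH[OF rest(1)] r_def by simp
    finally show ?thesis using \<open>s \<le> e\<close> by simp
  qed
qed

lemma dbinrep_extend:
  assumes "dbinrep e r s b" "b e < t"
  shows "dbinrep (Suc e) ((t choose Suc e) + r) s (b(Suc e := t))"
  unfolding dbinrep_def
proof (intro conjI allI impI)
  have s: "1 \<le> s" "s \<le> e" using assms(1) unfolding dbinrep_def by simp_all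
  then show "1 \<le> s" "s \<le> Suc e" by simp_all
  show "s \<le> (b(Suc e := t)) s" using assms(1) s unfolding dbinrep_def by simp
  show "(b(Suc e := t)) i < (b(Suc e := t)) (Suc i)" if "s \<le> i \<and> i < Suc e" for i
    using assms that unfolding dbinrep_def by (cases "i = e") simp_all
  have "(\<Sum>i=s..e. (b(Suc e := t)) i choose i) = (\<Sum>i=s..e. b i choose i)"
    by (intro sum.cong) auto
  then show "(t choose Suc e) + r = (\<Sum>i=s..Suc e. (b(Suc e := t)) i choose i)"
    using assms(1) s unfolding dbinrep_def by simp
qed

lemma dbinrep_exists: "m \<noteq> 0 \<Longrightarrow> \<exists>s a. dbinrep (Suc d) m s a"
proof (induction d arbitrary: m)
  case 0
  have "dbinrep (Suc 0) m (Suc 0) (\<lambda>_. m)" unfolding dbinrep_def using 0 by simp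
  then show ?case by blast
next
  case (Suc d)
  obtain t r where tr: "Suc (Suc d) \<le> t" "r < t choose Suc d" "m = (t choose Suc (Suc d)) + r"
    using cascade_decomp[OF Suc.prems] by metis
  show ?case
  proof (cases "r = 0")
    case True
    have "dbinrep (Suc (Suc d)) m (Suc (Suc d)) (\<lambda>_. t)" unfolding dbinrep_def using tr True by simp
    then show ?thesis by blast
  next
    case False
    obtain s b where sb: "dbinrep (Suc d) r s b" using Suc.IH[OF False] by blast
    have "b (Suc d) < t"
      using dbinrep_top_le[OF sb] tr(2) binomial_right_mono[of t "b (Suc d)" "Suc d"] by linarith
    then show ?thesis using dbinrep_extend[OF sb] tr(3) by blast
  qed
qed

lemma IncD_eq_inc_num:
  assumes "1 \<le> d"
  shows "IncD d m = inc_num d m"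
proof (cases "m = 0")
  case False
  obtain s0 a0 where "dbinrep d m s0 a0"
    using dbinrep_exists[OF False, of "d - 1"] assms by auto
  then have "\<exists>p. case p of (s, a) \<Rightarrow> dbinrep d m s a" by (intro exI[of _ "(s0, a0)"]) simp
  then have some: "case (SOME p. case p of (s, a) \<Rightarrow> dbinrep d m s a) of (s, a) \<Rightarrow> dbinrep d m s a"
    by (rule someI_ex)
  obtain s a where sa: "(SOME p. case p of (s, a) \<Rightarrow> dbinrep d m s a) = (s, a)"
    by (cases "SOME p. case p of (s, a) \<Rightarrow> dbinrep d m s a") auto
  then have "IncD d m = (\<Sum>i=s..d. (a i + 1) choose i)" unfolding IncD_def using False by simp
  also have "\<dots> = inc_num d m" using some sa by (intro dbinrep_sum_eq_inc_num) simp
  finally show ?thesis .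
qed (simp add: IncD_def inc_num_def)

theorem corollary3p13:
  fixes d :: nat and F :: "nat set set"
  assumes "d \<ge> 1" and "finite F" and "F \<subseteq> dsubsets d"
  shows "card (IncF F) \<ge> IncD d (card F)"
  using inc_num_le_card_IncF[OF assms(2,3)] IncD_eq_inc_num[OF assms(1)] by simp

end
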